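(* Let $k$ be a field of characteristic $0$ and let $\mathcal L$ be a Lie torus of type $(\Delta,\Lambda)$ over $k$. Suppose $\alpha\in\Delta^\times$, $0\neq x\in\mathcal L_\alpha$, $0\neq y\in\mathcal L_{-\alpha}$ and $[x,y]\in\mathcal L_0^0$. Then there is $\lambda\in\Lambda$ with $x\in\mathcal L_\alpha^\lambda$ and $y\in\mathcal L_{-\alpha}^{-\lambda}$.
   Context: An irreducible finite root system in a finite-dimensional $k$-vector space $\mathcal X$ is a finite subset $\Delta\subset\mathcal X$ with $0\in\Delta$ such that $\Delta^\times:=\Delta\setminus\{0\}$ is an irreducible (possibly non-reduced) finite root system in the usual sense. Write $Q=\mathrm{span}_{\mathbb Z}(\Delta)$, $\alpha^\vee$ for the coroot of $\alpha\in\Delta^\times$, $\langle\beta,\alpha^\vee\rangle$ for the natural pairing, and $\Delta^\times_{\mathrm{ind}}=\Delta^\times\setminus 2\Delta^\times$. Let $\Lambda$ be a finitely generated free abelian group. A Lie torus of type $(\Delta,\Lambda)$ is a Lie algebra $\mathcal L$ over $k$ with a $Q\times\Lambda$-grading $\mathcal L=\bigoplus_{(\alpha,\lambda)\in Q\times\Lambda}\mathcal L_\alpha^\lambda$ (with $\mathcal L_\alpha:=\bigoplus_\lambda\mathcal L_\alpha^\lambda$, $\mathcal L^\lambda:=\bigoplus_\alpha\mathcal L_\alpha^\lambda$) such that: (LT1) $\{\alpha\in Q:\mathcal L_\alpha\neq0\}=\Delta$; (LT2)(i) $\mathcal L_\alpha^0\neq0$ for all $\alpha\in\Delta^\times_{\mathrm{ind}}$;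 (ii) whenever $\alpha\in\Delta^\times$ and $\mathcal L_\alpha^\lambda\neq0$ there exist $e\in\mathcal L_\alpha^\lambda$, $f\in\mathcal L_{-\alpha}^{-\lambda}$ with $\mathcal L_\alpha^\lambda=ke$, $\mathcal L_{-\alpha}^{-\lambda}=kf$ and $[[e,f],x]=\langle\beta,\alpha^\vee\rangle x$ for all $x\in\mathcal L_\beta$, $\beta\in Q$; (LT3) $\mathcal L$ is generated as an algebra by the $\mathcal L_\alpha$, $\alpha\in\Delta^\times$; (LT4) $\Lambda$ is generated by $\{\lambda:\mathcal L^\lambda\neq0\}$. *)

theory Defs
  imports Complex_Main
begin

definition root_system_usual :: "('k::field \<Rightarrow> 'x::ab_group_add \<Rightarrow> 'x) \<Rightarrow> 'x set \<Rightarrow> bool" where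
  "root_system_usual scX R \<longleftrightarrow>
     vector_space scX \<and> finite R \<and> 0 \<notin> R \<and> module.span scX R = UNIV \<and>
     (\<forall>\<alpha>\<in>R. \<exists>f. Vector_Spaces.linear scX (*) f \<and> f \<alpha> = 2 \<and>
        (\<lambda>\<beta>. \<beta> - scX (f \<beta>) \<alpha>) ` R = R \<and> (\<forall>\<beta>\<in>R. f \<beta> \<in> \<int>))"

definition irreducible_root_system_usual :: "('k::field \<Rightarrow> 'x::ab_group_add \<Rightarrow> 'x) \<Rightarrow> 'x set \<Rightarrow> bool" where
  "irreducible_root_system_usual scX R \<longleftrightarrow>
     root_system_usual scX R \<and> R \<noteq> {} \<and>
     \<not> (\<exists>X1 X2. module.subspace scX X1 \<and> module.subspace scX X2 \<and>
            X1 \<noteq> {0} \<and> X2 \<noteq> {0} \<and> X1 \<inter> X2 = {0} \<and>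
            {a + b | a b. a \<in> X1 \<and> b \<in> X2} = UNIV \<and> R \<subseteq> X1 \<union> X2)"

definition irreducible_finite_root_system :: "('k::field \<Rightarrow> 'x::ab_group_add \<Rightarrow> 'x) \<Rightarrow> 'x set \<Rightarrow> bool" where
  "irreducible_finite_root_system scX D \<longleftrightarrow>
     finite D \<and> 0 \<in> D \<and> irreducible_root_system_usual scX (D - {0})"

text \<open>The coroot of alpha (unique for a root system), as a linear functional X \<rightarrow> k.\<close>
definition coroot :: "('k::field \<Rightarrow> 'x::ab_group_add \<Rightarrow> 'x) \<Rightarrow> 'x set \<Rightarrow> 'x \<Rightarrow> ('x \<Rightarrow> 'k)" where
  "coroot scX D \<alpha> = (SOME f. Vector_Spaces.linear scX (*) f \<and> f \<alpha> = 2 \<and>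
        (\<lambda>\<beta>. \<beta> - scX (f \<beta>) \<alpha>) ` (D - {0}) = D - {0} \<and> (\<forall>\<beta>\<in>D - {0}. f \<beta> \<in> \<int>))"

definition root_lattice :: "('k::field \<Rightarrow> 'x::ab_group_add \<Rightarrow> 'x) \<Rightarrow> 'x set \<Rightarrow> 'x set" where
  "root_lattice scX D = {\<Sum>v\<in>D. scX (of_int (c v)) v | c. True}"

definition roots_ind :: "('k::field \<Rightarrow> 'x::ab_group_add \<Rightarrow> 'x) \<Rightarrow> 'x set \<Rightarrow> 'x set" where
  "roots_ind scX D = (D - {0}) - {scX 2 \<beta> | \<beta>. \<beta> \<in> D - {0}}"

definition zsc :: "int \<Rightarrow> 'g::ab_group_add \<Rightarrow> 'g" where
  "zsc n g = (if 0 \<le> n then (\<Sum>_\<in>{..<nat n}. g) else - (\<Sum>_\<in>{..<nat (- n)}. g))"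

definition fg_free_abelian_type :: "'g::ab_group_add itself \<Rightarrow> bool" where
  "fg_free_abelian_type _ \<longleftrightarrow>
     (\<exists>(n::nat) (b::nat \<Rightarrow> 'g). \<forall>g::'g. \<exists>!c::nat \<Rightarrow> int.
        (\<forall>i\<ge>n. c i = 0) \<and> g = (\<Sum>i<n. zsc (c i) (b i)))"

definition lie_algebra :: "('k::field \<Rightarrow> 'L::ab_group_add \<Rightarrow> 'L) \<Rightarrow> ('L \<Rightarrow> 'L \<Rightarrow> 'L) \<Rightarrow> bool" where
  "lie_algebra scL br \<longleftrightarrow> vector_space scL \<and>
     (\<forall>x. Vector_Spaces.linear scL scL (br x)) \<and>
     (\<forall>y. Vector_Spaces.linear scL scL (\<lambda>x. br x y)) \<and>
     (\<forall>x. br x x = 0) \<and>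
     (\<forall>x y z. br x (br y z) + br y (br z x) + br z (br x y) = 0)"

definition graded_decomp :: "('x \<Rightarrow> 'g \<Rightarrow> 'L::ab_group_add set) \<Rightarrow> 'L \<Rightarrow> ('x \<times> 'g \<Rightarrow> 'L) \<Rightarrow> bool" where
  "graded_decomp Lg x c \<longleftrightarrow> finite {p. c p \<noteq> 0} \<and> (\<forall>p. c p \<in> Lg (fst p) (snd p)) \<and>
     x = (\<Sum>p\<in>{p. c p \<noteq> 0}. c p)"

definition is_grading :: "('k::field \<Rightarrow> 'L::ab_group_add \<Rightarrow> 'L) \<Rightarrow> ('L \<Rightarrow> 'L \<Rightarrow> 'L) \<Rightarrow>
    ('x::ab_group_add \<Rightarrow> 'g::ab_group_add \<Rightarrow> 'L set) \<Rightarrow> bool" where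
  "is_grading scL br Lg \<longleftrightarrow>
     (\<forall>a l. module.subspace scL (Lg a l)) \<and>
     (\<forall>x. \<exists>!c. graded_decomp Lg x c) \<and>
     (\<forall>a b l m. \<forall>u\<in>Lg a l. \<forall>v\<in>Lg b m. br u v \<in> Lg (a + b) (l + m))"

definition Lroot :: "('x \<Rightarrow> 'g \<Rightarrow> 'L::ab_group_add set) \<Rightarrow> 'x \<Rightarrow> 'L set" where
  "Lroot Lg a = {x. \<exists>c. graded_decomp Lg x c \<and> (\<forall>p. c p \<noteq> 0 \<longrightarrow> fst p = a)}"

definition Ldeg :: "('x \<Rightarrow> 'g \<Rightarrow> 'L::ab_group_add set) \<Rightarrow> 'g \<Rightarrow> 'L set" where
  "Ldeg Lg l = {x. \<exists>c. graded_decomp Lg x c \<and> (\<forall>p. c p \<noteq> 0 \<longrightarrow> snd p = l)}"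

definition lie_torus :: "('k::field \<Rightarrow> 'x::ab_group_add \<Rightarrow> 'x) \<Rightarrow> 'x set \<Rightarrow>
    ('k \<Rightarrow> 'L::ab_group_add \<Rightarrow> 'L) \<Rightarrow> ('L \<Rightarrow> 'L \<Rightarrow> 'L) \<Rightarrow> ('x \<Rightarrow> 'g::ab_group_add \<Rightarrow> 'L set) \<Rightarrow> bool" where
  "lie_torus scX D scL br Lg \<longleftrightarrow>
     lie_algebra scL br \<and> is_grading scL br Lg \<and>
     \<comment> \<open>the grading group is Q \<times> Lambda\<close>
     (\<forall>a l. a \<notin> root_lattice scX D \<longrightarrow> Lg a l = {0}) \<and>
     \<comment> \<open>(LT1)\<close>
     {a \<in> root_lattice scX D. Lroot Lg a \<noteq> {0}} = D \<and>
     \<comment> \<open>(LT2)(i)\<close>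
     (\<forall>a\<in>roots_ind scX D. Lg a 0 \<noteq> {0}) \<and>
     \<comment> \<open>(LT2)(ii)\<close>
     (\<forall>a\<in>D - {0}. \<forall>l. Lg a l \<noteq> {0} \<longrightarrow>
        (\<exists>e\<in>Lg a l. \<exists>f\<in>Lg (- a) (- l).
           Lg a l = range (\<lambda>t. scL t e) \<and> Lg (- a) (- l) = range (\<lambda>t. scL t f) \<and>
           (\<forall>b\<in>root_lattice scX D. \<forall>x\<in>Lroot Lg b.
               br (br e f) x = scL (coroot scX D a b) x))) \<and>
     \<comment> \<open>(LT3): the smallest subalgebra containing all L_alpha, alpha nonzero root, is L\<close>
     (\<forall>S. module.subspace scL S \<and> (\<forall>u\<in>S. \<forall>v\<in>S. br u v \<in> S) \<and>
          (\<forall>a\<in>D - {0}. Lroot Lg a \<subseteq> S) \<longrightarrow> S = UNIV) \<and>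
     \<comment> \<open>(LT4): Lambda is generated by the support of the Lambda-grading\<close>
     (\<forall>H::'g set. 0 \<in> H \<and> (\<forall>u\<in>H. \<forall>v\<in>H. u - v \<in> H) \<and>
          {l. Ldeg Lg l \<noteq> {0}} \<subseteq> H \<longrightarrow> H = UNIV)"

end

theory Submission
  imports Defs "HOL-Library.List_Lexorder"
begin

text \<open>Coordinates with respect to a basis, compared lexicographically, give \<Lambda> a total order
  compatible with addition. Decompose \<open>x = \<Sum>\<^sub>\<lambda> x\<^sub>\<lambda>\<close> and \<open>y = \<Sum>\<^sub>\<mu> y\<^sub>\<mu>\<close> into \<Lambda>-homogeneous parts.
  The degree \<open>\<lambda>\<^sub>max + \<mu>\<^sub>max\<close> is attained by a single pair, so the corresponding component of
  \<open>[x, y]\<close> is \<open>[x\<^sub>\<lambda>\<^sub>max, y\<^sub>\<mu>\<^sub>max]\<close>, which is nonzero: by (LT2) \<open>x\<^sub>\<lambda>\<^sub>max\<close> is part of an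
  \<open>sl\<^sub>2\<close>-triple \<open>(e, h, f)\<close>, and a vector of \<open>\<L>\<^sub>-\<^sub>\<alpha>\<close> killed by \<open>e\<close> would be a highest weight vector
  of negative weight whose \<open>f\<close>-string terminates in the finite root system, impossible in
  characteristic 0. Since \<open>[x, y]\<close> has degree 0, \<open>\<lambda>\<^sub>max + \<mu>\<^sub>max = 0\<close>, and likewise
  \<open>\<lambda>\<^sub>min + \<mu>\<^sub>min = 0\<close>; hence both supports are singletons.\<close>

section \<open>Translation-invariant orders on free abelian groups\<close>

definition ordered_embedding :: "('g::ab_group_add \<Rightarrow> 'o::linorder) \<Rightarrow> bool" where
  "ordered_embedding \<phi> \<longleftrightarrow> inj \<phi> \<and> (\<forall>a b c. \<phi> a < \<phi> b \<longrightarrow> \<phi> (a + c) < \<phi> (b + c))"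

lemma zsc_add_one: "zsc (n + 1) g = zsc n g + g"
proof (cases "0 \<le> n")
  case True
  then have "nat (n + 1) = Suc (nat n)" by simp
  with True show ?thesis by (simp add: zsc_def lessThan_Suc add.commute)
next
  case False
  then have "nat (- n) = Suc (nat (- (n + 1)))" by simp
  with False show ?thesis by (auto simp: zsc_def lessThan_Suc)
qed

lemma zsc_add: "zsc (m + n) g = zsc m g + zsc n g"
proof (induction n rule: int_induct[where k = 0])
  case base
  then show ?case by (simp add: zsc_def)
next
  case (step1 n)
  then show ?case by (metis add.assoc zsc_add_one)
next
  case (step2 n)
  have "zsc (m + (n - 1)) g + g = zsc m g + zsc (n - 1) g + g"
    using step2 zsc_add_one[of "m + (n - 1)" g] zsc_add_one[of "n - 1" g]
    by (simp add: algebra_simps)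
  then show ?case by simp
qed

lemma lex_less_map_add:
  fixes f g h :: "nat \<Rightarrow> int"
  shows "map f xs < map g xs \<Longrightarrow> map (\<lambda>i. f i + h i) xs < map (\<lambda>i. g i + h i) xs"
  by (induction xs) (auto simp: list_less_def)

lemma fg_free_abelian_ordered_embedding:
  assumes "fg_free_abelian_type TYPE('g::ab_group_add)"
  shows "\<exists>\<phi>::'g \<Rightarrow> int list. ordered_embedding \<phi>"
proof -
  obtain n and b :: "nat \<Rightarrow> 'g" where basis: "\<And>g::'g. \<exists>!c::nat \<Rightarrow> int.
        (\<forall>i\<ge>n. c i = 0) \<and> g = (\<Sum>i<n. zsc (c i) (b i))"
    using assms unfolding fg_free_abelian_type_def by blast
  define C where "C g = (THE c. (\<forall>i\<ge>n. c i = 0) \<and> g = (\<Sum>i<n. zsc (c i) (b i)))" for g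
  have C: "(\<forall>i\<ge>n. C g i = 0) \<and> g = (\<Sum>i<n. zsc (C g i) (b i))" for g
    unfolding C_def by (rule theI'[OF basis])
  have C_add: "C (g + h) = (\<lambda>i. C g i + C h i)" for g h
  proof -
    have "(\<forall>i\<ge>n. C g i + C h i = 0) \<and> g + h = (\<Sum>i<n. zsc (C g i + C h i) (b i))"
      using C[of g] C[of h] by (auto simp: zsc_add sum.distrib)
    then show ?thesis unfolding C_def[of "g + h"] by (intro the1_equality[OF basis])
  qed
  define \<phi> where "\<phi> g = map (C g) [0..<n]" for g
  have "inj \<phi>"
  proof
    fix g h assume "\<phi> g = \<phi> h"
    then have "\<forall>i<n. C g i = C h i" unfolding \<phi>_def by (simp add: map_eq_conv)
    then have "C g = C h" using C[of g] C[of h] by (auto simp: fun_eq_iff not_less)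
    have "g = (\<Sum>i<n. zsc (C g i) (b i))" using C by blast
    also have "\<dots> = h" using C[of h] unfolding \<open>C g = C h\<close> by simp
    finally show "g = h" .
  qed
  moreover have "\<phi> (g + k) < \<phi> (h + k)" if "\<phi> g < \<phi> h" for g h k
    using lex_less_map_add[OF that[unfolded \<phi>_def], of "C k"] by (simp add: \<phi>_def C_add)
  ultimately show ?thesis unfolding ordered_embedding_def by blast
qed

lemma ordered_embedding_add_le_eqD:
  assumes \<phi>: "ordered_embedding \<phi>"
    and "\<phi> l \<le> \<phi> l0" "\<phi> m \<le> \<phi> m0" and sum: "l + m = l0 + m0"
  shows "l = l0 \<and> m = m0"
proof -
  have add_le: "\<phi> (a + c) \<le> \<phi> (b + c)" if "\<phi> a \<le> \<phi> b" for a b c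
    using \<phi> that unfolding ordered_embedding_def by (metis inj_eq order_le_less)
  have "\<phi> l = \<phi> l0"
  proof (rule ccontr)
    assume "\<phi> l \<noteq> \<phi> l0"
    with \<open>\<phi> l \<le> \<phi> l0\<close> have "\<phi> (l + m) < \<phi> (l0 + m)"
      using \<phi> unfolding ordered_embedding_def by simp
    also have "\<phi> (l0 + m) \<le> \<phi> (l0 + m0)"
      using add_le[OF \<open>\<phi> m \<le> \<phi> m0\<close>, of l0] by (simp add: add.commute)
    finally show False using sum by simp
  qed
  then have "l = l0" using \<phi> unfolding ordered_embedding_def by (simp add: inj_eq)
  with sum show ?thesis by simp
qed

lemma finite_obtain_max_image:
  fixes f :: "'a \<Rightarrow> 'b::linorder"
  assumes "finite A" "A \<noteq> {}"
  obtains a where "a \<in> A" "\<And>b. b \<in> A \<Longrightarrow> f b \<le> f a"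
proof -
  have "Max (f ` A) \<in> f ` A" using assms by simp
  then obtain a where "a \<in> A" "f a = Max (f ` A)" by auto
  with assms show thesis by (intro that) auto
qed

lemma finite_obtain_min_image:
  fixes f :: "'a \<Rightarrow> 'b::linorder"
  assumes "finite A" "A \<noteq> {}"
  obtains a where "a \<in> A" "\<And>b. b \<in> A \<Longrightarrow> f a \<le> f b"
proof -
  have "Min (f ` A) \<in> f ` A" using assms by simp
  then obtain a where "a \<in> A" "f a = Min (f ` A)" by auto
  with assms show thesis by (intro that) auto
qed

text \<open>Both the sum of the maxima and the sum of the minima are uniquely attained.\<close>

lemma ordered_embedding_unique_sums_zero:
  fixes \<phi> :: "'g::ab_group_add \<Rightarrow> 'o::linorder" and A B :: "'g set"
  assumes \<phi>: "ordered_embedding \<phi>"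
    and A: "finite A" "A \<noteq> {}" and B: "finite B" "B \<noteq> {}"
    and unique_sum_zero: "\<And>l0 m0. l0 \<in> A \<Longrightarrow> m0 \<in> B \<Longrightarrow>
          (\<And>l m. l \<in> A \<Longrightarrow> m \<in> B \<Longrightarrow> l + m = l0 + m0 \<Longrightarrow> l = l0 \<and> m = m0) \<Longrightarrow> l0 + m0 = 0"
  shows "\<exists>l. A = {l} \<and> B = {- l}"
proof -
  obtain amax where amax: "amax \<in> A" "\<And>a. a \<in> A \<Longrightarrow> \<phi> a \<le> \<phi> amax"
    using finite_obtain_max_image[OF A] by blast
  obtain bmax where bmax: "bmax \<in> B" "\<And>b. b \<in> B \<Longrightarrow> \<phi> b \<le> \<phi> bmax"
    using finite_obtain_max_image[OF B] by blast
  obtain amin where amin: "amin \<in> A" "\<And>a. a \<in> A \<Longrightarrow> \<phi> amin \<le> \<phi> a"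
    using finite_obtain_min_image[OF A] by blast
  obtain bmin where bmin: "bmin \<in> B" "\<And>b. b \<in> B \<Longrightarrow> \<phi> bmin \<le> \<phi> b"
    using finite_obtain_min_image[OF B] by blast
  have max_sum: "amax + bmax = 0"
  proof (rule unique_sum_zero[OF amax(1) bmax(1)])
    fix l m assume "l \<in> A" "m \<in> B" "l + m = amax + bmax"
    then show "l = amax \<and> m = bmax"
      using ordered_embedding_add_le_eqD[OF \<phi> amax(2) bmax(2)] by blast
  qed
  have min_sum: "amin + bmin = 0"
  proof (rule unique_sum_zero[OF amin(1) bmin(1)])
    fix l m assume "l \<in> A" "m \<in> B" "l + m = amin + bmin"
    then show "l = amin \<and> m = bmin"
      using ordered_embedding_add_le_eqD[OF \<phi> amin(2) bmin(2), of l m] by simp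
  qed
  have "amin = amax" "bmin = bmax"
    using ordered_embedding_add_le_eqD[OF \<phi> amin(2)[OF amax(1)] bmin(2)[OF bmax(1)]]
      max_sum min_sum by simp_all
  then have "a = amax" if "a \<in> A" for a
    using \<phi> amax(2)[OF that] amin(2)[OF that]
    unfolding ordered_embedding_def by (simp add: inj_eq order_antisym)
  moreover have "b = bmax" if "b \<in> B" for b
    using \<phi> bmax(2)[OF that] bmin(2)[OF that] \<open>bmin = bmax\<close>
    unfolding ordered_embedding_def by (simp add: inj_eq order_antisym)
  ultimately have "A = {amax}" "B = {bmax}" using amax(1) bmax(1) by blast+
  moreover have "bmax = - amax" using max_sum by (simp add: eq_neg_iff_add_eq_0 add.commute)
  ultimately show ?thesis by blast
qed

section \<open>Lie algebras and \<open>sl\<^sub>2\<close>-strings\<close>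

locale lie_alg =
  fixes scL :: "'k::field_char_0 \<Rightarrow> 'L::ab_group_add \<Rightarrow> 'L" and br :: "'L \<Rightarrow> 'L \<Rightarrow> 'L"
  assumes lie_algebra: "lie_algebra scL br"
begin

sublocale L: vector_space scL
  using lie_algebra unfolding lie_algebra_def by blast

lemma br_right_hom: "module_hom scL scL (br u)"
  using lie_algebra unfolding lie_algebra_def by (simp add: linear_iff_module_hom)

lemma br_left_hom: "module_hom scL scL (\<lambda>v. br v u)"
  using lie_algebra unfolding lie_algebra_def by (simp add: linear_iff_module_hom)

lemma br_add_right: "br u (v + w) = br u v + br u w"
  by (rule module_hom.add[OF br_right_hom])

lemma br_add_left: "br (v + w) u = br v u + br w u"
  using module_hom.add[OF br_left_hom] by blast

lemma br_scale_right: "br u (scL t v) = scL t (br u v)"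
  by (rule module_hom.scale[OF br_right_hom])

lemma br_scale_left: "br (scL t v) u = scL t (br v u)"
  using module_hom.scale[OF br_left_hom] by blast

lemma br_zero_right [simp]: "br u 0 = 0"
  by (rule module_hom.zero[OF br_right_hom])

lemma br_minus_right: "br u (- v) = - br u v"
  by (rule module_hom.neg[OF br_right_hom])

lemma br_sum_right: "br u (sum g S) = (\<Sum>a\<in>S. br u (g a))"
  by (rule module_hom.sum[OF br_right_hom])

lemma br_sum_left: "br (sum g S) u = (\<Sum>a\<in>S. br (g a) u)"
  using module_hom.sum[OF br_left_hom] by blast

lemma br_anticomm: "br u v = - br v u"
proof -
  have self: "br w w = 0" for w
    using lie_algebra unfolding lie_algebra_def by blast
  have "0 = br (u + v) (u + v)" by (simp add: self)
  also have "\<dots> = br u u + br v u + (br u v + br v v)" by (simp only: br_add_right br_add_left)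
  finally show ?thesis by (simp add: self eq_neg_iff_add_eq_0 add.commute)
qed

lemma br_jacobi: "br e (br f w) = br f (br e w) + br (br e f) w"
proof -
  have "br e (br f w) + br f (br w e) + br w (br e f) = 0"
    using lie_algebra unfolding lie_algebra_def by blast
  moreover have "br f (br w e) = - br f (br e w)" by (metis br_anticomm br_minus_right)
  moreover have "br w (br e f) = - br (br e f) w" by (rule br_anticomm)
  ultimately show ?thesis by (simp add: algebra_simps)
qed

text \<open>\<open>v\<close> is a highest weight vector of weight \<open>-2\<close> for \<open>(e, [e, f], f)\<close>; in characteristic 0 the
  string \<open>v, [f, v], [f, [f, v]], \<dots>\<close> of such a vector never terminates.\<close>

lemma highest_weight_string_vanishes:
  assumes highest: "br e v = 0"
    and weight: "\<And>n. br (br e f) ((br f ^^ n) v) = scL (- (2 * of_nat (Suc n))) ((br f ^^ n) v)"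
    and vanishes: "(br f ^^ N) v = 0"
  shows "v = 0"
proof -
  define F where "F n = (br f ^^ n) v" for n
  have F_Suc: "F (Suc n) = br f (F n)" for n by (simp add: F_def)
  have raise: "br e (F (Suc n)) = scL (- of_nat ((n + 1) * (n + 2))) (F n)" for n
  proof (induction n)
    case 0
    have "br e (F (Suc 0)) = br f (br e (F 0)) + br (br e f) (F 0)"
      unfolding F_Suc by (rule br_jacobi)
    also have "\<dots> = scL (- 2) (F 0)" using weight[of 0] highest by (simp add: F_def)
    finally show ?case by simp
  next
    case (Suc n)
    have "br e (F (Suc (Suc n))) = br f (br e (F (Suc n))) + br (br e f) (F (Suc n))"
      unfolding F_Suc[of "Suc n"] by (rule br_jacobi)
    also have "\<dots> = scL (- of_nat ((n + 1) * (n + 2)) + - (2 * of_nat (Suc (Suc n)))) (F (Suc n))"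
      using weight[of "Suc n"]
      by (simp only: Suc.IH br_scale_right F_Suc[symmetric] F_def[symmetric] L.scale_left_distrib)
    also have "- of_nat ((n + 1) * (n + 2)) + - (2 * of_nat (Suc (Suc n))) =
        (- of_nat ((Suc n + 1) * (Suc n + 2)) :: 'k)"
      by (simp add: algebra_simps)
    finally show ?case .
  qed
  have "F n = 0 \<Longrightarrow> v = 0" for n
  proof (induction n)
    case (Suc n)
    have "scL (- of_nat ((n + 1) * (n + 2))) (F n) = 0"
      using raise[of n] Suc.prems by simp
    then have "F n = 0" by (simp only: L.scale_eq_0_iff neg_equal_0_iff_equal of_nat_eq_0_iff) simp
    then show ?case by (rule Suc.IH)
  qed (simp add: F_def)
  with vanishes show ?thesis unfolding F_def by blast
qed

end

locale lie_grading = lie_alg scL br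
  for scL :: "'k::field_char_0 \<Rightarrow> 'L::ab_group_add \<Rightarrow> 'L" and br :: "'L \<Rightarrow> 'L \<Rightarrow> 'L" +
  fixes Lg :: "'x::ab_group_add \<Rightarrow> 'g::ab_group_add \<Rightarrow> 'L set"
  assumes grading: "is_grading scL br Lg"
begin

lemma Lg_subspace: "L.subspace (Lg a l)"
  using grading unfolding is_grading_def by blast

lemma zero_in_Lg [simp]: "0 \<in> Lg a l"
  by (rule L.subspace_0[OF Lg_subspace])

lemma br_Lg: "u \<in> Lg a l \<Longrightarrow> v \<in> Lg b m \<Longrightarrow> br u v \<in> Lg (a + b) (l + m)"
  using grading unfolding is_grading_def by blast

lemma Lg_subset_Lroot: "Lg a l \<subseteq> Lroot Lg a"
proof
  fix w assume w: "w \<in> Lg a l"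
  define c where "c p = (if p = (a, l) then w else 0)" for p
  have supp: "{p. c p \<noteq> 0} = (if w = 0 then {} else {(a, l)})"
    by (auto simp: c_def)
  have "graded_decomp Lg w c"
    unfolding graded_decomp_def supp using w by (auto simp: c_def)
  moreover have "\<forall>p. c p \<noteq> 0 \<longrightarrow> fst p = a" by (auto simp: c_def)
  ultimately show "w \<in> Lroot Lg a" unfolding Lroot_def by blast
qed

lemma Lroot_obtain_components:
  assumes "x \<in> Lroot Lg a"
  obtains xs where "finite {l. xs l \<noteq> 0}" "\<And>l. xs l \<in> Lg a l"
    "x = (\<Sum>l\<in>{l. xs l \<noteq> 0}. xs l)"
proof -
  obtain c where c: "graded_decomp Lg x c" and ca: "\<forall>p. c p \<noteq> 0 \<longrightarrow> fst p = a"
    using assms unfolding Lroot_def by blast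
  define xs where "xs l = c (a, l)" for l
  have supp: "{p. c p \<noteq> 0} = Pair a ` {l. xs l \<noteq> 0}"
    using ca by (force simp: xs_def)
  have "finite {p. c p \<noteq> 0}" using c unfolding graded_decomp_def by blast
  then have "finite {l. xs l \<noteq> 0}"
    unfolding supp by (rule finite_imageD) (simp add: inj_on_def)
  moreover have "xs l \<in> Lg a l" for l
    using c unfolding graded_decomp_def xs_def by (metis fst_conv snd_conv)
  moreover have "x = (\<Sum>l\<in>{l. xs l \<noteq> 0}. xs l)"
  proof -
    have "x = sum c (Pair a ` {l. xs l \<noteq> 0})"
      using c unfolding graded_decomp_def supp by blast
    also have "\<dots> = (\<Sum>l\<in>{l. xs l \<noteq> 0}. xs l)"
      by (subst sum.reindex) (auto simp: inj_on_def xs_def)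
    finally show ?thesis .
  qed
  ultimately show ?thesis using that by blast
qed

lemma homogeneous_component_zero:
  assumes I: "finite I" and w: "\<And>\<nu>. \<nu> \<in> I \<Longrightarrow> w \<nu> \<in> Lg a \<nu>"
    and sum: "(\<Sum>\<nu>\<in>I. w \<nu>) \<in> Lg a0 l0" and \<nu>: "\<nu> \<in> I" and ne: "(a, \<nu>) \<noteq> (a0, l0)"
  shows "w \<nu> = 0"
proof -
  define z where "z = (\<Sum>\<nu>\<in>I. w \<nu>)"
  define c where "c p = (if fst p = a \<and> snd p \<in> I then w (snd p) else 0)" for p
  define c' where "c' p = (if p = (a0, l0) then z else 0)" for p
  have supp: "{p. c p \<noteq> 0} \<subseteq> Pair a ` I" by (auto simp: c_def image_iff intro: prod_eqI)
  have "graded_decomp Lg z c"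
    unfolding graded_decomp_def
  proof (intro conjI allI)
    show "finite {p. c p \<noteq> 0}" using supp I finite_subset by blast
    show "c p \<in> Lg (fst p) (snd p)" for p using w by (auto simp: c_def)
    have "z = sum c (Pair a ` I)"
      unfolding z_def by (subst sum.reindex) (auto simp: inj_on_def c_def)
    also have "\<dots> = sum c {p. c p \<noteq> 0}"
      by (rule sum.mono_neutral_right) (use I supp in auto)
    finally show "z = sum c {p. c p \<noteq> 0}" .
  qed
  moreover have "graded_decomp Lg z c'"
  proof -
    have "{p. c' p \<noteq> 0} = (if z = 0 then {} else {(a0, l0)})" by (auto simp: c'_def)
    then show ?thesis unfolding graded_decomp_def using sum by (auto simp: c'_def z_def)
  qed
  ultimately have "c = c'" using grading unfolding is_grading_def by blast
  then have "c (a, \<nu>) = c' (a, \<nu>)" by simp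
  then show ?thesis using \<nu> ne by (auto simp: c_def c'_def)
qed

end

section \<open>Lie tori\<close>

locale lie_torus_setting =
  fixes scX :: "'k::field_char_0 \<Rightarrow> 'x::ab_group_add \<Rightarrow> 'x" and D :: "'x set"
    and scL :: "'k \<Rightarrow> 'L::ab_group_add \<Rightarrow> 'L" and br :: "'L \<Rightarrow> 'L \<Rightarrow> 'L"
    and Lg :: "'x \<Rightarrow> 'g::ab_group_add \<Rightarrow> 'L set"
  assumes root_system: "irreducible_finite_root_system scX D"
    and lie_torus: "lie_torus scX D scL br Lg"
begin

sublocale lie_grading scL br Lg
  using lie_torus unfolding lie_torus_def by unfold_locales blast+

lemma reduced_root_system: "root_system_usual scX (D - {0})"
  using root_system
  unfolding irreducible_finite_root_system_def irreducible_root_system_usual_def by blast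

sublocale X: vector_space scX
  using reduced_root_system unfolding root_system_usual_def by blast

lemma finite_roots: "finite D"
  using root_system unfolding irreducible_finite_root_system_def by blast

lemma Lg_outside_root_lattice: "\<forall>a l. a \<notin> root_lattice scX D \<longrightarrow> Lg a l = {0}"
  using lie_torus unfolding lie_torus_def by (elim conjE) assumption

lemma Lroot_support: "{a \<in> root_lattice scX D. Lroot Lg a \<noteq> {0}} = D"
  using lie_torus unfolding lie_torus_def by (elim conjE) assumption

lemma sl2_triples: "\<forall>a\<in>D - {0}. \<forall>l. Lg a l \<noteq> {0} \<longrightarrow>
    (\<exists>e\<in>Lg a l. \<exists>f\<in>Lg (- a) (- l).
       Lg a l = range (\<lambda>t. scL t e) \<and> Lg (- a) (- l) = range (\<lambda>t. scL t f) \<and>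
       (\<forall>b\<in>root_lattice scX D. \<forall>x\<in>Lroot Lg b. br (br e f) x = scL (coroot scX D a b) x))"
  using lie_torus unfolding lie_torus_def by (elim conjE) assumption

lemma Lg_zero_outside_roots:
  assumes "\<beta> \<notin> D" "w \<in> Lg \<beta> l"
  shows "w = 0"
proof (cases "\<beta> \<in> root_lattice scX D")
  case True
  then have "Lroot Lg \<beta> = {0}" using assms(1) Lroot_support by blast
  then show ?thesis using Lg_subset_Lroot assms(2) by blast
next
  case False
  then show ?thesis using assms(2) Lg_outside_root_lattice by blast
qed

lemma coroot_linear:
  assumes "\<alpha> \<in> D - {0}"
  shows "module_hom scX (*) (coroot scX D \<alpha>)" and "coroot scX D \<alpha> \<alpha> = 2"
proof -
  have "\<exists>f. Vector_Spaces.linear scX (*) f \<and> f \<alpha> = 2 \<and>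
        (\<lambda>\<beta>. \<beta> - scX (f \<beta>) \<alpha>) ` (D - {0}) = D - {0} \<and> (\<forall>\<beta>\<in>D - {0}. f \<beta> \<in> \<int>)"
    using reduced_root_system assms unfolding root_system_usual_def by blast
  from someI_ex[OF this] show "module_hom scX (*) (coroot scX D \<alpha>)" "coroot scX D \<alpha> \<alpha> = 2"
    unfolding coroot_def[symmetric] by (simp_all add: linear_iff_module_hom)
qed

lemma ad_power_in_root_space:
  assumes "f \<in> Lg (- \<alpha>) m" "v \<in> Lg (- \<alpha>) \<mu>"
  shows "\<exists>l. (br f ^^ n) v \<in> Lg (scX (- of_nat (Suc n)) \<alpha>) l"
proof (induction n)
  case 0
  then show ?case using assms(2) by auto
next
  case (Suc n)
  then obtain l where "(br f ^^ n) v \<in> Lg (scX (- of_nat (Suc n)) \<alpha>) l" by blast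
  from br_Lg[OF assms(1) this]
  have "(br f ^^ Suc n) v \<in> Lg (- \<alpha> + scX (- of_nat (Suc n)) \<alpha>) (m + l)" by simp
  moreover have "- \<alpha> + scX (- of_nat (Suc n)) \<alpha> = scX (- of_nat (Suc (Suc n))) \<alpha>"
    using X.scale_left_distrib[of "- 1" "- of_nat (Suc n)" \<alpha>] by (simp add: add_ac)
  ultimately show ?case by auto
qed

text \<open>The root string \<open>-\<alpha>, -2\<alpha>, -3\<alpha>, \<dots>\<close> leaves the finite set \<open>D\<close>.\<close>

lemma ad_power_eventually_zero:
  assumes \<alpha>: "\<alpha> \<in> D - {0}" and "f \<in> Lg (- \<alpha>) m" "v \<in> Lg (- \<alpha>) \<mu>"
  shows "\<exists>N. (br f ^^ N) v = 0"
proof -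
  have "inj (\<lambda>n::nat. scX (- of_nat (Suc n)) \<alpha>)"
    using \<alpha> by (auto intro!: injI dest: X.scale_right_imp_eq)
  then have "infinite (range (\<lambda>n::nat. scX (- of_nat (Suc n)) \<alpha>))"
    using finite_imageD infinite_UNIV_nat by blast
  then obtain N where "scX (- of_nat (Suc N)) \<alpha> \<notin> D"
    using finite_roots by (meson finite_subset image_subsetI)
  moreover obtain l where "(br f ^^ N) v \<in> Lg (scX (- of_nat (Suc N)) \<alpha>) l"
    using ad_power_in_root_space[OF assms(2,3)] by blast
  ultimately show ?thesis using Lg_zero_outside_roots by blast
qed

lemma br_opposite_root_vectors_nonzero:
  assumes \<alpha>: "\<alpha> \<in> D - {0}" and u: "u \<in> Lg \<alpha> l" "u \<noteq> 0"
    and v: "v \<in> Lg (- \<alpha>) \<mu>" "v \<noteq> 0"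
  shows "br u v \<noteq> 0"
proof -
  have "Lg \<alpha> l \<noteq> {0}" using u by blast
  from sl2_triples[rule_format, OF \<alpha> this] obtain e f where f: "f \<in> Lg (- \<alpha>) (- l)"
    and span: "Lg \<alpha> l = range (\<lambda>t. scL t e)"
    and coroot_action: "\<forall>b\<in>root_lattice scX D. \<forall>x\<in>Lroot Lg b.
          br (br e f) x = scL (coroot scX D \<alpha> b) x"
    by (elim bexE conjE)
  obtain t where t: "u = scL t e" using u(1) span by blast
  have weight: "br (br e f) ((br f ^^ n) v) = scL (- (2 * of_nat (Suc n))) ((br f ^^ n) v)" for n
  proof -
    obtain l' where l': "(br f ^^ n) v \<in> Lg (scX (- of_nat (Suc n)) \<alpha>) l'"
      using ad_power_in_root_space[OF f v(1)] by blast
    show ?thesis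
    proof (cases "scX (- of_nat (Suc n)) \<alpha> \<in> root_lattice scX D")
      case True
      then have "br (br e f) ((br f ^^ n) v) =
          scL (coroot scX D \<alpha> (scX (- of_nat (Suc n)) \<alpha>)) ((br f ^^ n) v)"
        using coroot_action Lg_subset_Lroot l' by blast
      moreover have "coroot scX D \<alpha> (scX (- of_nat (Suc n)) \<alpha>) = - (2 * of_nat (Suc n))"
        using module_hom.scale[OF coroot_linear(1)[OF \<alpha>]] coroot_linear(2)[OF \<alpha>] by simp
      ultimately show ?thesis by simp
    next
      case False
      then have "(br f ^^ n) v = 0"
        using l' Lg_outside_root_lattice by blast
      then show ?thesis by simp
    qed
  qed
  have "br e v \<noteq> 0"
    using lie_alg.highest_weight_string_vanishes[OF lie_alg_axioms _ weight] v(2)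
      ad_power_eventually_zero[OF \<alpha> f v(1)] by blast
  with t u(2) show ?thesis by (auto simp: br_scale_left)
qed

lemma unique_degree_pair_sum_zero:
  assumes \<alpha>: "\<alpha> \<in> D - {0}" and A: "finite A" and B: "finite B"
    and xs: "\<And>l. xs l \<in> Lg \<alpha> l" and ys: "\<And>m. ys m \<in> Lg (- \<alpha>) m"
    and degree_zero: "br (\<Sum>l\<in>A. xs l) (\<Sum>m\<in>B. ys m) \<in> Lg 0 0"
    and l0: "l0 \<in> A" "xs l0 \<noteq> 0" and m0: "m0 \<in> B" "ys m0 \<noteq> 0"
    and unique: "\<And>l m. l \<in> A \<Longrightarrow> m \<in> B \<Longrightarrow> l + m = l0 + m0 \<Longrightarrow> l = l0 \<and> m = m0"
  shows "l0 + m0 = 0"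
proof (rule ccontr)
  assume nonzero: "l0 + m0 \<noteq> 0"
  define deg where "deg p = fst p + snd p" for p :: "'g \<times> 'g"
  define W where "W \<nu> = (\<Sum>p\<in>{p \<in> A \<times> B. deg p = \<nu>}. br (xs (fst p)) (ys (snd p)))" for \<nu>
  have "br (\<Sum>l\<in>A. xs l) (\<Sum>m\<in>B. ys m) = (\<Sum>l\<in>A. \<Sum>m\<in>B. br (xs l) (ys m))"
    by (subst br_sum_left) (simp only: br_sum_right)
  also have "\<dots> = (\<Sum>p\<in>A \<times> B. br (xs (fst p)) (ys (snd p)))"
    by (simp add: sum.cartesian_product case_prod_beta)
  also have "\<dots> = (\<Sum>\<nu>\<in>deg ` (A \<times> B). W \<nu>)"
    unfolding W_def using A B by (intro sum.image_gen) simp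
  finally have "(\<Sum>\<nu>\<in>deg ` (A \<times> B). W \<nu>) \<in> Lg 0 0" using degree_zero by simp
  moreover have "W \<nu> \<in> Lg 0 \<nu>" for \<nu>
    unfolding W_def
  proof (rule L.subspace_sum[OF Lg_subspace])
    fix p assume "p \<in> {p \<in> A \<times> B. deg p = \<nu>}"
    then show "br (xs (fst p)) (ys (snd p)) \<in> Lg 0 \<nu>"
      using br_Lg[OF xs ys, of "fst p" "snd p"] by (simp add: deg_def)
  qed
  moreover have "l0 + m0 \<in> deg ` (A \<times> B)" using l0 m0 unfolding deg_def by force
  ultimately have "W (l0 + m0) = 0"
    using A B nonzero by (intro homogeneous_component_zero) auto
  moreover have "{p \<in> A \<times> B. deg p = l0 + m0} = {(l0, m0)}"
    using unique l0 m0 unfolding deg_def by auto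
  ultimately have "br (xs l0) (ys m0) = 0" unfolding W_def by simp
  then show False using br_opposite_root_vectors_nonzero[OF \<alpha> xs l0(2) ys m0(2)] by contradiction
qed

lemma homogeneous_if_br_in_Lg_0_0:
  fixes \<phi> :: "'g \<Rightarrow> 'o::linorder"
  assumes \<phi>: "ordered_embedding \<phi>" and \<alpha>: "\<alpha> \<in> D - {0}"
    and x: "x \<in> Lroot Lg \<alpha>" "x \<noteq> 0" and y: "y \<in> Lroot Lg (- \<alpha>)" "y \<noteq> 0"
    and degree_zero: "br x y \<in> Lg 0 0"
  shows "\<exists>l. x \<in> Lg \<alpha> l \<and> y \<in> Lg (- \<alpha>) (- l)"
proof -
  obtain xs where A: "finite {l. xs l \<noteq> 0}" and xs: "\<And>l. xs l \<in> Lg \<alpha> l"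
    and x_sum: "x = (\<Sum>l\<in>{l. xs l \<noteq> 0}. xs l)"
    using Lroot_obtain_components[OF x(1)] by blast
  obtain ys where B: "finite {m. ys m \<noteq> 0}" and ys: "\<And>m. ys m \<in> Lg (- \<alpha>) m"
    and y_sum: "y = (\<Sum>m\<in>{m. ys m \<noteq> 0}. ys m)"
    using Lroot_obtain_components[OF y(1)] by blast
  have "\<exists>l. {l. xs l \<noteq> 0} = {l} \<and> {m. ys m \<noteq> 0} = {- l}"
  proof (rule ordered_embedding_unique_sums_zero[OF \<phi> A _ B])
    show "{l. xs l \<noteq> 0} \<noteq> {}" using x(2) x_sum by force
    show "{m. ys m \<noteq> 0} \<noteq> {}" using y(2) y_sum by force
    fix l0 m0 assume "l0 \<in> {l. xs l \<noteq> 0}" "m0 \<in> {m. ys m \<noteq> 0}"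
      and "\<And>l m. l \<in> {l. xs l \<noteq> 0} \<Longrightarrow> m \<in> {m. ys m \<noteq> 0} \<Longrightarrow> l + m = l0 + m0 \<Longrightarrow>
          l = l0 \<and> m = m0"
    then show "l0 + m0 = 0"
      using unique_degree_pair_sum_zero[OF \<alpha> A B xs ys degree_zero[unfolded x_sum y_sum]]
      by blast
  qed
  then obtain l where "{l. xs l \<noteq> 0} = {l}" "{m. ys m \<noteq> 0} = {- l}" by blast
  then have "x = xs l" "y = ys (- l)" using x_sum y_sum by simp_all
  then show ?thesis using xs ys by blast
qed

end

theorem lemma3p6:
  fixes scX :: "'k::field_char_0 \<Rightarrow> 'x::ab_group_add \<Rightarrow> 'x"
    and D :: "'x set"
    and scL :: "'k \<Rightarrow> 'L::ab_group_add \<Rightarrow> 'L"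
    and br :: "'L \<Rightarrow> 'L \<Rightarrow> 'L"
    and Lg :: "'x \<Rightarrow> 'g::ab_group_add \<Rightarrow> 'L set"
    and \<alpha> :: 'x and x y :: 'L
  assumes "irreducible_finite_root_system scX D"
    and "fg_free_abelian_type TYPE('g)"
    and "lie_torus scX D scL br Lg"
    and "\<alpha> \<in> D - {0}"
    and "x \<in> Lroot Lg \<alpha>" and "x \<noteq> 0"
    and "y \<in> Lroot Lg (- \<alpha>)" and "y \<noteq> 0"
    and "br x y \<in> Lg 0 0"
  shows "\<exists>l. x \<in> Lg \<alpha> l \<and> y \<in> Lg (- \<alpha>) (- l)"
proof -
  interpret lie_torus_setting scX D scL br Lg
    using assms(1,3) by unfold_locales
  obtain \<phi> :: "'g \<Rightarrow> int list" where "ordered_embedding \<phi>"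
    using fg_free_abelian_ordered_embedding[OF assms(2)] by blast
  from homogeneous_if_br_in_Lg_0_0[OF this assms(4-9)] show ?thesis .
qed

end
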